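(* Let $\alpha \in [0,1)$ and $k \in \{0,\dots,m-1\}$. For the homogeneous sample $\mathbf{S}_k = (S_k,\dots,S_k) \in \Omega$, $$B^*(\mathbf{S}_k) = S_{\min}\left(1 - \sqrt[n]{\alpha}\right) + S_k \sqrt[n]{\alpha},$$ where $B^*(\mathbf{S}_k)$ is the highest value assigned to $\mathbf{S}_k$ by any valid bound.
   Context: Fix integers $m \ge 2$, $n \ge 1$ and reals $S_{\min} < S_{\max}$; $S = \{S_0,\dots,S_{m-1}\}$ with $S_k = S_{\min} + k\frac{S_{\max}-S_{\min}}{m-1}$. $\mathcal{F}$ is the set of probability distributions on $S$; $E[F]$ is the mean. $\Omega$ is the set of samples of size $n$ from $S$, identified with their sorted versions. For $F \in \mathcal{F}$, $\mathbf{X}$ denotes a sample of $n$ i.i.d. draws from $F$. A bound is a function $B:\Omega\to\mathbb{R}$; it is valid (at level $1-\alpha$) if $P_F[B(\mathbf{X}) \le E[F]] \ge 1-\alpha$ for every $F \in \mathcal{F}$. *)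

theory Defs
  imports Main "HOL-Library.Multiset" "HOL-Library.FuncSet" Complex_Main
begin

definition grid :: "nat \<Rightarrow> real \<Rightarrow> real \<Rightarrow> nat \<Rightarrow> real" where
  "grid m Smin Smax k = Smin + real k * (Smax - Smin) / (real m - 1)"

text \<open>A distribution F on S, given by its probability mass p k on S_k, k < m.\<close>
definition is_distr :: "nat \<Rightarrow> (nat \<Rightarrow> real) \<Rightarrow> bool" where
  "is_distr m p \<longleftrightarrow> (\<forall>k<m. 0 \<le> p k) \<and> (\<Sum>k<m. p k) = 1"

definition mean :: "nat \<Rightarrow> real \<Rightarrow> real \<Rightarrow> (nat \<Rightarrow> real) \<Rightarrow> real" where
  "mean m Smin Smax p = (\<Sum>k<m. p k * grid m Smin Smax k)"

text \<open>Samples (sorted, i.e. unordered) of size n are represented as multisets of indices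
  into S; an ordered i.i.d. draw is a function x : {0..<n} -> {0..<m}.\<close>
definition sample_of :: "nat \<Rightarrow> (nat \<Rightarrow> nat) \<Rightarrow> nat multiset" where
  "sample_of n x = image_mset x (mset_set {0..<n})"

text \<open>P_F[B(X) \<le> E[F]] for X consisting of n i.i.d. draws from F.\<close>
definition prob_below_mean ::
  "nat \<Rightarrow> nat \<Rightarrow> real \<Rightarrow> real \<Rightarrow> (nat multiset \<Rightarrow> real) \<Rightarrow> (nat \<Rightarrow> real) \<Rightarrow> real" where
  "prob_below_mean m n Smin Smax B p =
     (\<Sum>x \<in> {0..<n} \<rightarrow>\<^sub>E {0..<m}.
        (if B (sample_of n x) \<le> mean m Smin Smax p then (\<Prod>i<n. p (x i)) else 0))"

definition valid_bound ::
  "nat \<Rightarrow> nat \<Rightarrow> real \<Rightarrow> real \<Rightarrow> real \<Rightarrow> (nat multiset \<Rightarrow> real) \<Rightarrow> bool" where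
  "valid_bound m n Smin Smax \<alpha> B \<longleftrightarrow>
     (\<forall>p. is_distr m p \<longrightarrow> prob_below_mean m n Smin Smax B p \<ge> 1 - \<alpha>)"

definition hom_sample :: "nat \<Rightarrow> nat \<Rightarrow> nat multiset" where
  "hom_sample n k = replicate_mset n k"

end

theory Submission
  imports Defs
begin

text \<open>
  If a valid bound B gave the homogeneous sample a value above
  v = S_min + \<alpha>^(1/n) (S_k - S_min), put mass q on S_k and 1 - q on S_min, with
  \<alpha>^(1/n) < q close enough to \<alpha>^(1/n) that the mean S_min + q (S_k - S_min) is still
  below B(S_k, ..., S_k). Then B exceeds the mean on the all-k draw, whose probability
  is q^n > \<alpha>, so B is not valid. Conversely, the bound equal to v on the homogeneous
  sample and to S_min elsewhere is valid: S_min is below every mean, and if v is above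
  the mean of F then F(S_k) < \<alpha>^(1/n), so the only failing draw has probability
  F(S_k)^n \<le> \<alpha>.
\<close>

lemma sample_of_eq_hom_sample_iff:
  assumes "x \<in> extensional {0..<n}"
  shows "sample_of n x = hom_sample n k \<longleftrightarrow> x = restrict (\<lambda>_. k) {0..<n}"
proof
  assume hom: "sample_of n x = hom_sample n k"
  show "x = restrict (\<lambda>_. k) {0..<n}"
  proof (rule extensionalityI[OF assms])
    show "restrict (\<lambda>_. k) {0..<n} \<in> extensional {0..<n}" by simp
    fix i assume "i \<in> {0..<n}"
    then have "x i \<in># sample_of n x" by (simp add: sample_of_def)
    with hom \<open>i \<in> {0..<n}\<close> show "x i = restrict (\<lambda>_. k) {0..<n} i"
      by (simp add: hom_sample_def split: if_splits)
  qed
next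
  assume "x = restrict (\<lambda>_. k) {0..<n}"
  then have "sample_of n x = image_mset (\<lambda>_. k) (mset_set {0..<n})"
    unfolding sample_of_def by (intro image_mset_cong) auto
  then show "sample_of n x = hom_sample n k"
    by (simp add: hom_sample_def image_mset_const_eq)
qed

lemma sum_draw_weights:
  fixes n :: nat
  assumes "is_distr m p"
  shows "(\<Sum>x \<in> {0..<n} \<rightarrow>\<^sub>E {0..<m}. \<Prod>i<n. p (x i)) = 1"
proof -
  have "(\<Sum>x \<in> {0..<n} \<rightarrow>\<^sub>E {0..<m}. \<Prod>i<n. p (x i))
      = (\<Sum>x \<in> {0..<n} \<rightarrow>\<^sub>E {0..<m}. \<Prod>i\<in>{0..<n}. p (x i))"
    by (simp only: atLeast0LessThan)
  also have "\<dots> = (\<Prod>i\<in>{0..<n}. \<Sum>j\<in>{0..<m}. p j)"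
    by (rule prod_sum_PiE[symmetric]) auto
  also have "\<dots> = 1"
    using assms by (simp add: is_distr_def atLeast0LessThan)
  finally show ?thesis .
qed

lemma draw_weight_nonneg:
  fixes n :: nat
  assumes "is_distr m p" "x \<in> {0..<n} \<rightarrow>\<^sub>E {0..<m}"
  shows "0 \<le> (\<Prod>i<n. p (x i))"
proof (intro prod_nonneg)
  fix i assume "i \<in> {..<n}"
  then have "x i < m" using PiE_mem[OF assms(2), of i] by simp
  with assms(1) show "0 \<le> p (x i)" by (simp add: is_distr_def)
qed

lemma sum_draw_weights_except_const:
  assumes "is_distr m p" "k < m"
  shows "(\<Sum>x \<in> {0..<n} \<rightarrow>\<^sub>E {0..<m}.
            if x = restrict (\<lambda>_. k) {0..<n} then 0 else \<Prod>i<n. p (x i)) = 1 - p k ^ n"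
proof -
  let ?D = "{0..<n} \<rightarrow>\<^sub>E {0..<m}" and ?c = "restrict (\<lambda>_. k) {0..<n}"
  let ?w = "\<lambda>x. \<Prod>i<n. p (x i)"
  have c: "?c \<in> ?D" and fin: "finite ?D"
    using assms(2) by (auto simp: finite_PiE)
  have "(\<Sum>x\<in>?D - {?c}. if x = ?c then 0 else ?w x) = (\<Sum>x\<in>?D - {?c}. ?w x)"
    by (rule sum.cong) auto
  then have "(\<Sum>x\<in>?D. if x = ?c then 0 else ?w x) = (\<Sum>x\<in>?D - {?c}. ?w x)"
    using sum.remove[OF fin c, of "\<lambda>x. if x = ?c then 0 else ?w x"] by simp
  also have "\<dots> = 1 - ?w ?c"
    using sum.remove[OF fin c, of ?w] sum_draw_weights[OF assms(1)] by simp
  finally show ?thesis by simp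
qed

lemma prob_below_mean_le_if_hom_sample_above_mean:
  assumes "is_distr m p" "k < m" "mean m Smin Smax p < B (hom_sample n k)"
  shows "prob_below_mean m n Smin Smax B p \<le> 1 - p k ^ n"
  unfolding prob_below_mean_def sum_draw_weights_except_const[OF assms(1,2), symmetric]
proof (rule sum_mono)
  fix x assume x: "x \<in> {0..<n} \<rightarrow>\<^sub>E {0..<m}"
  have "sample_of n x = hom_sample n k \<longleftrightarrow> x = restrict (\<lambda>_. k) {0..<n}"
    using x by (intro sample_of_eq_hom_sample_iff) (simp add: PiE_iff)
  with assms(3) draw_weight_nonneg[OF assms(1) x]
  show "(if B (sample_of n x) \<le> mean m Smin Smax p then \<Prod>i<n. p (x i) else 0)
      \<le> (if x = restrict (\<lambda>_. k) {0..<n} then 0 else \<Prod>i<n. p (x i))"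
    by auto
qed

lemma prob_below_mean_ge_if_others_below_mean:
  assumes "is_distr m p" "k < m"
    and "\<And>s. s \<noteq> hom_sample n k \<Longrightarrow> B s \<le> mean m Smin Smax p"
  shows "1 - p k ^ n \<le> prob_below_mean m n Smin Smax B p"
  unfolding prob_below_mean_def sum_draw_weights_except_const[OF assms(1,2), symmetric]
proof (rule sum_mono)
  fix x assume x: "x \<in> {0..<n} \<rightarrow>\<^sub>E {0..<m}"
  have "sample_of n x = hom_sample n k \<longleftrightarrow> x = restrict (\<lambda>_. k) {0..<n}"
    using x by (intro sample_of_eq_hom_sample_iff) (simp add: PiE_iff)
  with assms(3)[of "sample_of n x"] draw_weight_nonneg[OF assms(1) x]
  show "(if x = restrict (\<lambda>_. k) {0..<n} then 0 else \<Prod>i<n. p (x i))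
      \<le> (if B (sample_of n x) \<le> mean m Smin Smax p then \<Prod>i<n. p (x i) else 0)"
    by auto
qed

lemma prob_below_mean_eq_1_if_below_mean:
  assumes "is_distr m p" "\<And>s. B s \<le> mean m Smin Smax p"
  shows "prob_below_mean m n Smin Smax B p = 1"
  using assms(2) sum_draw_weights[OF assms(1)] by (simp add: prob_below_mean_def)

lemma grid_ge_Smin:
  assumes "1 \<le> m" "Smin \<le> Smax"
  shows "Smin \<le> grid m Smin Smax j"
  using assms by (simp add: grid_def)

lemma mean_ge_mass:
  assumes "1 \<le> m" "Smin \<le> Smax" "is_distr m p" "k < m"
  shows "Smin + p k * (grid m Smin Smax k - Smin) \<le> mean m Smin Smax p"
proof -
  have "p k * (grid m Smin Smax k - Smin) \<le> (\<Sum>j<m. p j * (grid m Smin Smax j - Smin))"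
    using assms grid_ge_Smin[OF assms(1,2)]
    by (intro member_le_sum[where f = "\<lambda>j. p j * (grid m Smin Smax j - Smin)"])
       (auto simp: is_distr_def)
  also have "\<dots> = mean m Smin Smax p - Smin * (\<Sum>j<m. p j)"
    by (simp add: mean_def algebra_simps sum_subtractf sum_distrib_left)
  also have "\<dots> = mean m Smin Smax p - Smin"
    using assms(3) by (simp add: is_distr_def)
  finally show ?thesis by simp
qed

lemma mean_ge_Smin:
  assumes "1 \<le> m" "Smin \<le> Smax" "is_distr m p"
  shows "Smin \<le> mean m Smin Smax p"
proof -
  have "0 \<le> p 0 * (grid m Smin Smax 0 - Smin)"
    using assms by (simp add: is_distr_def grid_def)
  with mean_ge_mass[OF assms, of 0] assms(1) show ?thesis by simp
qed

text \<open>Mass q on S_k and 1 - q on S_0 = S_min; for k = 0 this is the point mass at S_0,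
  so in general only q \<le> two_point k q k.\<close>

definition two_point :: "nat \<Rightarrow> real \<Rightarrow> nat \<Rightarrow> real" where
  "two_point k q j = (if j = k then q else 0) + (if j = 0 then 1 - q else 0)"

lemma is_distr_two_point:
  assumes "k < m" "0 \<le> q" "q \<le> 1"
  shows "is_distr m (two_point k q)"
  using assms by (simp add: is_distr_def two_point_def sum.distrib)

lemma mean_two_point:
  assumes "k < m"
  shows "mean m Smin Smax (two_point k q) = Smin + q * (grid m Smin Smax k - Smin)"
proof -
  have "mean m Smin Smax (two_point k q)
      = (\<Sum>j<m. (if j = k then q * grid m Smin Smax k else 0)
               + (if j = 0 then (1 - q) * grid m Smin Smax 0 else 0))"
    unfolding mean_def by (intro sum.cong) (auto simp: two_point_def algebra_simps)
  also have "\<dots> = q * grid m Smin Smax k + (1 - q) * grid m Smin Smax 0"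
    using assms by (simp add: sum.distrib)
  finally show ?thesis by (simp add: grid_def algebra_simps)
qed

lemma ex_between_scaled:
  fixes r d c :: real
  assumes "r < 1" "0 \<le> d" "r * d < c"
  obtains q where "r < q" "q \<le> 1" "q * d < c"
proof (cases "d = 0")
  case True
  with assms that[of 1] show ?thesis by simp
next
  case False
  with assms have "r < min 1 (c / d)" by (simp add: field_simps)
  then obtain q where q: "r < q" "q < min 1 (c / d)" using dense by blast
  with \<open>d \<noteq> 0\<close> assms(2) have "q * d < c" by (simp add: field_simps)
  with q that show ?thesis by simp
qed

lemma valid_bound_hom_sample_le:
  assumes "1 \<le> m" "n \<ge> 1" "Smin \<le> Smax" "0 \<le> \<alpha>" "\<alpha> < 1" "k < m"
    and "valid_bound m n Smin Smax \<alpha> B"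
  shows "B (hom_sample n k) \<le> Smin + root n \<alpha> * (grid m Smin Smax k - Smin)"
proof (rule ccontr)
  let ?r = "root n \<alpha>" and ?d = "grid m Smin Smax k - Smin"
  assume "\<not> ?thesis"
  then have "?r * ?d < B (hom_sample n k) - Smin" by simp
  moreover have "?r < 1" "0 \<le> ?r" using assms by simp_all
  moreover have "0 \<le> ?d" using grid_ge_Smin[OF assms(1,3)] by simp
  ultimately obtain q where q: "?r < q" "q \<le> 1" "q * ?d < B (hom_sample n k) - Smin"
    using ex_between_scaled by metis
  have p: "is_distr m (two_point k q)"
    using is_distr_two_point[OF assms(6)] q \<open>0 \<le> ?r\<close> by simp
  have "\<alpha> = ?r ^ n" using assms by simp
  also have "\<dots> < q ^ n" using q \<open>0 \<le> ?r\<close> assms(2) by (intro power_strict_mono) simp_all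
  also have "\<dots> \<le> two_point k q k ^ n"
    using q \<open>0 \<le> ?r\<close> by (intro power_mono) (simp_all add: two_point_def)
  also have "\<dots> \<le> 1 - prob_below_mean m n Smin Smax B (two_point k q)"
  proof -
    have "mean m Smin Smax (two_point k q) < B (hom_sample n k)"
      using q(3) by (simp add: mean_two_point[OF assms(6)])
    then have "prob_below_mean m n Smin Smax B (two_point k q) \<le> 1 - two_point k q k ^ n"
      by (rule prob_below_mean_le_if_hom_sample_above_mean[OF p assms(6)])
    then show ?thesis by linarith
  qed
  finally have "\<alpha> < 1 - prob_below_mean m n Smin Smax B (two_point k q)" .
  moreover have "1 - \<alpha> \<le> prob_below_mean m n Smin Smax B (two_point k q)"
    using assms(7) p unfolding valid_bound_def by blast
  ultimately show False by linarith
qed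

lemma valid_bound_extremal:
  assumes "1 \<le> m" "n \<ge> 1" "Smin \<le> Smax" "0 \<le> \<alpha>" "k < m"
  defines "v \<equiv> Smin + root n \<alpha> * (grid m Smin Smax k - Smin)"
  shows "valid_bound m n Smin Smax \<alpha> (\<lambda>s. if s = hom_sample n k then v else Smin)"
  unfolding valid_bound_def
proof (intro allI impI)
  fix p assume p: "is_distr m p"
  let ?B = "\<lambda>s. if s = hom_sample n k then v else Smin" and ?M = "mean m Smin Smax p"
  have Smin_le_mean: "Smin \<le> ?M" using mean_ge_Smin[OF assms(1,3) p] .
  show "1 - \<alpha> \<le> prob_below_mean m n Smin Smax ?B p"
  proof (cases "p k \<le> root n \<alpha>")
    case True
    have "p k ^ n \<le> root n \<alpha> ^ n"
      using True p assms(5) by (intro power_mono) (auto simp: is_distr_def)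
    also have "\<dots> = \<alpha>" using assms by simp
    finally have "p k ^ n \<le> \<alpha>" .
    moreover have "1 - p k ^ n \<le> prob_below_mean m n Smin Smax ?B p"
      by (rule prob_below_mean_ge_if_others_below_mean[OF p assms(5)]) (simp add: Smin_le_mean)
    ultimately show ?thesis by simp
  next
    case False
    have "root n \<alpha> * (grid m Smin Smax k - Smin) \<le> p k * (grid m Smin Smax k - Smin)"
      using False grid_ge_Smin[OF assms(1,3), of k] by (intro mult_right_mono) simp_all
    then have "v \<le> Smin + p k * (grid m Smin Smax k - Smin)"
      unfolding v_def by linarith
    also have "\<dots> \<le> ?M" using mean_ge_mass[OF assms(1,3) p assms(5)] .
    finally have "?B s \<le> ?M" for s
      using Smin_le_mean by simp
    then have "prob_below_mean m n Smin Smax ?B p = 1"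
      by (rule prob_below_mean_eq_1_if_below_mean[OF p])
    with assms(4) show ?thesis by simp
  qed
qed

theorem theorem2:
  fixes m n k :: nat and Smin Smax \<alpha> :: real
  assumes "m \<ge> 2" "n \<ge> 1" "Smin < Smax"
    and "0 \<le> \<alpha>" "\<alpha> < 1" "k < m"
  shows "(\<exists>B. valid_bound m n Smin Smax \<alpha> B \<and>
            B (hom_sample n k) = Smin * (1 - root n \<alpha>) + grid m Smin Smax k * root n \<alpha>)
       \<and> (\<forall>B. valid_bound m n Smin Smax \<alpha> B \<longrightarrow>
            B (hom_sample n k) \<le> Smin * (1 - root n \<alpha>) + grid m Smin Smax k * root n \<alpha>)"
proof -
  have m: "1 \<le> m" and S: "Smin \<le> Smax" using assms by simp_all
  have v: "Smin * (1 - root n \<alpha>) + grid m Smin Smax k * root n \<alpha>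
      = Smin + root n \<alpha> * (grid m Smin Smax k - Smin)"
    by (simp add: algebra_simps)
  show ?thesis
    unfolding v
    using valid_bound_extremal[OF m assms(2) S assms(4,6)]
      valid_bound_hom_sample_le[OF m assms(2) S assms(4,5,6)]
    by (intro conjI exI[where x = "\<lambda>s. if s = hom_sample n k
        then Smin + root n \<alpha> * (grid m Smin Smax k - Smin) else Smin"]) simp_all
qed

end
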